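(* Let $a,c\in[0,1]$ with $a\neq\frac12$, $c\neq\frac12$, and define $f_{a,c}:[0,1]\to[0,1]$ by $$f_{a,c}(x)=\begin{cases}(1-2a)x^2+2ax, & x\in[0,\frac13],\\ x, & x\in(\frac13,\frac23),\\ (1-2c)x^2+2cx, & x\in[\frac23,1].\end{cases}$$ Let $f^n$ denote the $n$-fold composition of $f=f_{a,c}$ with itself and $x^{(n)}=f^n(x^{(0)})$. Then: 1. The set of fixed points of $f_{a,c}$ is $(\frac13,\frac23)\cup\{0,1\}$. 2. If $0\le a<\frac12$ and $0\le c<\frac12$, then for every $x^{(0)}\in[\frac23,1)$ there exist $n\in\mathbb N$ and $p\in[\frac49(1+c),\frac23)$ such that $f^n(x^{(0)})=p$ and $f^{n+1}(x^{(0)})=f(p)=p$. 3. If $0\le a<\frac12$ (and $c\ne\frac12$ arbitrary), then $\lim_{n\to\infty}x^{(n)}=0$ for all $x^{(0)}\in[0,\frac13]$. 4. If $\frac12<c\le1$ (and $a\ne\frac12$ arbitrary), then $\lim_{n\to\infty}x^{(n)}=1$ for all $x^{(0)}\in[\frac23,1]$. 5. If $\frac12<a\le1$ and $0\le c<\frac12$, then for every $x^{(0)}\in(0,\frac13]$ (respectively $x^{(0)}\in[\frac23,1)$) there exist $n\in\mathbb N$ and $p\in(\frac13,\frac19(4a+1)]$ (respectively $p\in[\frac49(1+c),\frac23)$) such that $f^n(x^{(0)})=p$ and $f^{n+1}(x^{(0)})=f(p)=p$. 6. If $\frac12<a\le1$ and $\frac12<c\le1$, then for every $x^{(0)}\in(0,\frac13]$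 there exist $n\in\mathbb N$ and $p\in(\frac13,\frac19(4a+1)]$ such that $f^n(x^{(0)})=p$ and $f^{n+1}(x^{(0)})=f(p)=p$.
   Context: This map is the reduction to $[0,1]$ of the quadratic stochastic operator $x'=x^2+2p(x)xy$, $y'=2(1-p(x))xy+y^2$ (with $y=1-x$), where $p(x)=a$ for $x\le\frac13$, $b$ for $\frac13<x<\frac23$, $c$ for $x\ge\frac23$, in the case $b=\frac12$. *)

theory Defs
  imports Complex_Main
begin

definition fac :: "real \<Rightarrow> real \<Rightarrow> real \<Rightarrow> real" where
  "fac a c x = (if x \<le> 1/3 then (1 - 2*a) * x^2 + 2*a*x
                else if x < 2/3 then x
                else (1 - 2*c) * x^2 + 2*c*x)"

end

theory Submission
  imports Defs
begin

(* On [0,1/3] the map is x + (2a - 1) x (1 - x), on [2/3,1] it is x + (2c - 1) x (1 - x), and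
   every point of the open middle third is fixed. For a < 1/2 the left branch contracts towards 0
   at rate (1 + 4a)/3. For a > 1/2 it raises every point of [x0,1/3] by at least a fixed amount, so
   the orbit eventually jumps over 1/3, landing no higher than f(1/3) = (4a + 1)/9 < 2/3, i.e. on a
   fixed point. The reflection x \<mapsto> 1 - x conjugates f_{a,c} to f_{1-c,1-a}, which turns the
   statements about [2/3,1] into the ones about [0,1/3]. *)

lemma funpow_reaches_if_uniformly_increasing:
  fixes g :: "real \<Rightarrow> real"
  assumes "d > 0"
    and step: "\<And>x. x \<in> S \<Longrightarrow> P (g x) \<or> (g x \<in> S \<and> x + d \<le> g x)"
    and bounded: "\<And>x. x \<in> S \<Longrightarrow> x \<le> U"
    and "x \<in> S"
  shows "\<exists>n. P ((g ^^ n) x)"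
proof (rule ccontr)
  assume never: "\<nexists>n. P ((g ^^ n) x)"
  have orbit: "(g ^^ n) x \<in> S \<and> x + real n * d \<le> (g ^^ n) x" for n
  proof (induction n)
    case 0
    show ?case using \<open>x \<in> S\<close> by simp
  next
    case (Suc n)
    have "\<not> P ((g ^^ Suc n) x)" using never by blast
    then show ?case using step[of "(g ^^ n) x"] Suc.IH by (auto simp: algebra_simps)
  qed
  obtain n where "(U - x) / d < real n" using reals_Archimedean2 by blast
  then have "U < x + real n * d" using \<open>d > 0\<close> by (simp add: field_simps)
  then show False using orbit[of n] bounded by force
qed

lemma funpow_tendsto_zero_if_contracting:
  fixes g :: "real \<Rightarrow> real"
  assumes "0 \<le> q" "q < 1"
    and step: "\<And>x. 0 \<le> x \<Longrightarrow> x \<le> b \<Longrightarrow> 0 \<le> g x \<and> g x \<le> q * x"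
    and "0 \<le> x0" "x0 \<le> b"
  shows "(\<lambda>n. (g ^^ n) x0) \<longlonglongrightarrow> 0"
proof -
  have bound: "0 \<le> (g ^^ n) x0 \<and> (g ^^ n) x0 \<le> q ^ n * x0" for n
  proof (induction n)
    case 0
    show ?case using \<open>0 \<le> x0\<close> by simp
  next
    case (Suc n)
    let ?y = "(g ^^ n) x0"
    have "q ^ n * x0 \<le> x0"
      using assms by (simp add: mult_left_le_one_le power_le_one)
    then have "0 \<le> g ?y \<and> g ?y \<le> q * ?y" using step Suc.IH \<open>x0 \<le> b\<close> by auto
    moreover have "q * ?y \<le> q * (q ^ n * x0)" using Suc.IH \<open>0 \<le> q\<close> by (intro mult_left_mono) auto
    ultimately show ?case by simp
  qed
  have lower: "\<forall>\<^sub>F n in sequentially. 0 \<le> (g ^^ n) x0"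
    and upper: "\<forall>\<^sub>F n in sequentially. (g ^^ n) x0 \<le> q ^ n * x0"
    using bound by simp_all
  have "(\<lambda>n. q ^ n * x0) \<longlonglongrightarrow> 0"
    using assms by (intro tendsto_mult_left_zero LIMSEQ_power_zero) simp
  with lower upper tendsto_const show ?thesis by (rule real_tendsto_sandwich)
qed

lemma fac_left: "x \<le> 1/3 \<Longrightarrow> fac a c x = x + (2*a - 1) * (x * (1 - x))"
  by (simp add: fac_def algebra_simps power2_eq_square)

lemma fac_middle: "1/3 < x \<Longrightarrow> x < 2/3 \<Longrightarrow> fac a c x = x"
  by (simp add: fac_def)

lemma fac_right: "2/3 \<le> x \<Longrightarrow> fac a c x = x + (2*c - 1) * (x * (1 - x))"
  by (simp add: fac_def algebra_simps power2_eq_square)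

lemma fac_reflect: "fac a c (1 - x) = 1 - fac (1 - c) (1 - a) x"
  by (simp add: fac_def algebra_simps power2_eq_square)

lemma funpow_fac_reflect: "(fac a c ^^ n) (1 - x) = 1 - (fac (1 - c) (1 - a) ^^ n) x"
  by (induction n) (simp_all add: fac_reflect)

lemma fac_fixed_points:
  assumes "a \<noteq> 1/2" "c \<noteq> 1/2"
  shows "{x \<in> {0..1}. fac a c x = x} = {1/3<..<2/3} \<union> {0, 1}"
proof (intro set_eqI iffI)
  fix x :: real
  assume "x \<in> {x \<in> {0..1}. fac a c x = x}"
  then have x: "0 \<le> x" "x \<le> 1" "fac a c x = x" by auto
  consider "x \<le> 1/3" | "1/3 < x" "x < 2/3" | "2/3 \<le> x" by linarith
  then show "x \<in> {1/3<..<2/3} \<union> {0, 1}"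
  proof cases
    case 1
    then have "(2*a - 1) * (x * (1 - x)) = 0" using x fac_left[of x a c] by simp
    then show ?thesis using 1 assms by auto
  next
    case 2
    then show ?thesis by simp
  next
    case 3
    then have "(2*c - 1) * (x * (1 - x)) = 0" using x fac_right[of x a c] by simp
    then show ?thesis using 3 assms by auto
  qed
next
  fix x :: real
  assume "x \<in> {1/3<..<2/3} \<union> {0, 1}"
  then show "x \<in> {x \<in> {0..1}. fac a c x = x}" by (auto simp: fac_def)
qed

lemma fac_left_le_image_of_one_third:
  assumes "0 \<le> a" "0 \<le> x" "x \<le> 1/3"
  shows "fac a c x \<le> (4*a + 1) / 9"
proof -
  have "(4*a + 1) / 9 - fac a c x = (1/3 - x) * ((1/3 + x) + 2*a*(2/3 - x))"
    using assms by (simp add: fac_def field_simps power2_eq_square)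
  also have "\<dots> \<ge> 0" using assms by (intro mult_nonneg_nonneg) auto
  finally show ?thesis by simp
qed

lemma fac_left_reaches_middle:
  assumes "1/2 < a" "0 < x0" "x0 \<le> 1/3"
  shows "\<exists>n. (fac a c ^^ n) x0 \<in> {1/3<..(4*a + 1) / 9}"
proof -
  define d where "d = (2*a - 1) * (x0 * (2/3))"
  have "d > 0" using assms by (simp add: d_def)
  moreover have "fac a c x \<in> {1/3<..(4*a + 1) / 9} \<or> (fac a c x \<in> {x0..1/3} \<and> x + d \<le> fac a c x)"
    if x: "x \<in> {x0..1/3}" for x
  proof -
    have "x0 * (2/3) \<le> x * (1 - x)" using x assms by (intro mult_mono) auto
    then have "d \<le> (2*a - 1) * (x * (1 - x))"
      unfolding d_def using assms by (intro mult_left_mono) auto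
    then have "x + d \<le> fac a c x" using x fac_left[of x a c] by simp
    moreover have "fac a c x \<le> (4*a + 1) / 9"
      using x assms by (intro fac_left_le_image_of_one_third) auto
    ultimately show ?thesis using x \<open>d > 0\<close> by auto
  qed
  ultimately show ?thesis
    using assms by (intro funpow_reaches_if_uniformly_increasing[where S = "{x0..1/3}" and U = "1/3"
        and P = "\<lambda>y. y \<in> {1/3<..(4*a + 1) / 9}" and g = "fac a c"]) auto
qed

lemma fac_right_reaches_middle:
  assumes "c < 1/2" "2/3 \<le> x0" "x0 < 1"
  shows "\<exists>n. (fac a c ^^ n) x0 \<in> {4/9*(1 + c)..<2/3}"
proof -
  obtain n where "(fac (1 - c) (1 - a) ^^ n) (1 - x0) \<in> {1/3<..(4*(1 - c) + 1) / 9}"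
    using fac_left_reaches_middle[of "1 - c" "1 - x0"] assms by auto
  moreover have "(fac a c ^^ n) x0 = 1 - (fac (1 - c) (1 - a) ^^ n) (1 - x0)"
    using funpow_fac_reflect[of n a c "1 - x0"] by simp
  ultimately show ?thesis by (intro exI[of _ n]) auto
qed

lemma fac_left_tendsto_zero:
  assumes "0 \<le> a" "a < 1/2" "0 \<le> x0" "x0 \<le> 1/3"
  shows "(\<lambda>n. (fac a c ^^ n) x0) \<longlonglongrightarrow> 0"
proof (rule funpow_tendsto_zero_if_contracting)
  fix x :: real
  assume x: "0 \<le> x" "x \<le> 1/3"
  have "fac a c x = x * ((1 - 2*a) * x + 2*a)"
    using x by (simp add: fac_def algebra_simps power2_eq_square)
  moreover have "(1 + 4*a) / 3 * x - fac a c x = (1 - 2*a) * (x * (1/3 - x))"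
    using x by (simp add: fac_def field_simps power2_eq_square)
  moreover have "0 \<le> x * ((1 - 2*a) * x + 2*a)" "0 \<le> (1 - 2*a) * (x * (1/3 - x))"
    using x assms by (intro mult_nonneg_nonneg; simp)+
  ultimately show "0 \<le> fac a c x \<and> fac a c x \<le> (1 + 4*a) / 3 * x" by linarith
qed (use assms in auto)

lemma fac_right_tendsto_one:
  assumes "1/2 < c" "c \<le> 1" "2/3 \<le> x0" "x0 \<le> 1"
  shows "(\<lambda>n. (fac a c ^^ n) x0) \<longlonglongrightarrow> 1"
proof -
  have "(\<lambda>n. (fac (1 - c) (1 - a) ^^ n) (1 - x0)) \<longlonglongrightarrow> 0"
    using assms by (intro fac_left_tendsto_zero) auto
  then have "(\<lambda>n. 1 - (fac (1 - c) (1 - a) ^^ n) (1 - x0)) \<longlonglongrightarrow> 1 - 0"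
    by (intro tendsto_diff tendsto_const)
  then show ?thesis using funpow_fac_reflect[of _ a c "1 - x0"] by simp
qed

lemma lands_on_fixed_point:
  assumes "\<exists>n. (f ^^ n) x0 \<in> I" "\<And>p. p \<in> I \<Longrightarrow> f p = p"
  shows "\<exists>n. \<exists>p \<in> I. (f ^^ n) x0 = p \<and> (f ^^ Suc n) x0 = f p \<and> f p = p"
  using assms by auto

theorem theorem2p6:
  fixes a c :: real
  assumes "0 \<le> a" "a \<le> 1" "0 \<le> c" "c \<le> 1" "a \<noteq> 1/2" "c \<noteq> 1/2"
  defines "f \<equiv> fac a c"
  shows
    "({x \<in> {0..1}. f x = x} = {1/3<..<2/3} \<union> {0, 1})
     \<and> (a < 1/2 \<and> c < 1/2 \<longrightarrow>
         (\<forall>x0 \<in> {2/3..<1}. \<exists>n::nat. \<exists>p \<in> {4/9*(1+c)..<2/3}.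
            (f ^^ n) x0 = p \<and> (f ^^ Suc n) x0 = f p \<and> f p = p))
     \<and> (a < 1/2 \<longrightarrow> (\<forall>x0 \<in> {0..1/3}. (\<lambda>n. (f ^^ n) x0) \<longlonglongrightarrow> 0))
     \<and> (1/2 < c \<longrightarrow> (\<forall>x0 \<in> {2/3..1}. (\<lambda>n. (f ^^ n) x0) \<longlonglongrightarrow> 1))
     \<and> (1/2 < a \<and> c < 1/2 \<longrightarrow>
         (\<forall>x0 \<in> {0<..1/3}. \<exists>n::nat. \<exists>p \<in> {1/3<..1/9*(4*a+1)}.
            (f ^^ n) x0 = p \<and> (f ^^ Suc n) x0 = f p \<and> f p = p) \<and>
         (\<forall>x0 \<in> {2/3..<1}. \<exists>n::nat. \<exists>p \<in> {4/9*(1+c)..<2/3}.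
            (f ^^ n) x0 = p \<and> (f ^^ Suc n) x0 = f p \<and> f p = p))
     \<and> (1/2 < a \<and> 1/2 < c \<longrightarrow>
         (\<forall>x0 \<in> {0<..1/3}. \<exists>n::nat. \<exists>p \<in> {1/3<..1/9*(4*a+1)}.
            (f ^^ n) x0 = p \<and> (f ^^ Suc n) x0 = f p \<and> f p = p))"
proof -
  have fixed: "{x \<in> {0..1}. f x = x} = {1/3<..<2/3} \<union> {0, 1}"
    unfolding f_def using assms by (intro fac_fixed_points)
  have left_to_fixed: "\<forall>x0 \<in> {0<..1/3}. \<exists>n. \<exists>p \<in> {1/3<..1/9*(4*a+1)}.
      (f ^^ n) x0 = p \<and> (f ^^ Suc n) x0 = f p \<and> f p = p" if "1/2 < a"
    using that assms fac_left_reaches_middle[of a _ c]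
    by (intro ballI lands_on_fixed_point) (auto simp: f_def intro!: fac_middle)
  have right_to_fixed: "\<forall>x0 \<in> {2/3..<1}. \<exists>n. \<exists>p \<in> {4/9*(1+c)..<2/3}.
      (f ^^ n) x0 = p \<and> (f ^^ Suc n) x0 = f p \<and> f p = p" if "c < 1/2"
    using that assms fac_right_reaches_middle[of c _ a]
    by (intro ballI lands_on_fixed_point) (auto simp: f_def intro!: fac_middle)
  have to_zero: "\<forall>x0 \<in> {0..1/3}. (\<lambda>n. (f ^^ n) x0) \<longlonglongrightarrow> 0" if "a < 1/2"
    unfolding f_def using that assms by (intro ballI fac_left_tendsto_zero) auto
  have to_one: "\<forall>x0 \<in> {2/3..1}. (\<lambda>n. (f ^^ n) x0) \<longlonglongrightarrow> 1" if "1/2 < c"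
    unfolding f_def using that assms by (intro ballI fac_right_tendsto_one) auto
  show ?thesis
    using fixed left_to_fixed right_to_fixed to_zero to_one by blast
qed

end
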